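(* There exist a Cantor set $W\subseteq\mathbb{R}^2$, a metric on $W$ compatible with its topology, and a homeomorphism $G\colon W\to W$ which is not transitive, has the (LRS) property with respect to that metric, and whose set of periodic points consists of a single fixed point.
   Context: A Cantor set is a compact metric space that is totally disconnected and has no isolated points. A map $f\colon X\to X$ on a metric space $(X,d)$ has the (LRS) (locally radially shrinking) property if for every $x\in X$ there is $\varepsilon_x>0$ such that $0<d(x,y)<\varepsilon_x$ implies $d(f(x),f(y))<d(x,y)$. $G$ is transitive if for all nonempty open $U,V\subseteq W$ there is $n\in\mathbb{N}$ with $G^n(U)\cap V\neq\emptyset$. A periodic point is $x$ with $G^n(x)=x$ for some $n\geq 1$. *)

theory Defs
  imports "HOL-Analysis.Analysis"
begin

definition totally_disconnected_set :: "'a::topological_space set \<Rightarrow> bool" where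
  "totally_disconnected_set W \<longleftrightarrow> (\<forall>S. S \<subseteq> W \<and> connected S \<longrightarrow> (\<exists>a. S \<subseteq> {a}))"

definition cantor_set :: "'a::metric_space set \<Rightarrow> bool" where
  "cantor_set W \<longleftrightarrow> compact W \<and> totally_disconnected_set W \<and> (\<forall>x\<in>W. x islimpt W)"

definition LRS :: "'a set \<Rightarrow> ('a \<Rightarrow> 'a \<Rightarrow> real) \<Rightarrow> ('a \<Rightarrow> 'a) \<Rightarrow> bool" where
  "LRS W d f \<longleftrightarrow> (\<forall>x\<in>W. \<exists>\<epsilon>>0. \<forall>y\<in>W. 0 < d x y \<and> d x y < \<epsilon> \<longrightarrow> d (f x) (f y) < d x y)"

definition transitive_on :: "'a::topological_space set \<Rightarrow> ('a \<Rightarrow> 'a) \<Rightarrow> bool" where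
  "transitive_on W G \<longleftrightarrow>
     (\<forall>U V. openin (top_of_set W) U \<and> openin (top_of_set W) V \<and> U \<noteq> {} \<and> V \<noteq> {}
        \<longrightarrow> (\<exists>n\<ge>1. (G ^^ n) ` U \<inter> V \<noteq> {}))"

definition periodic_points :: "'a set \<Rightarrow> ('a \<Rightarrow> 'a) \<Rightarrow> 'a set" where
  "periodic_points W G = {x \<in> W. \<exists>n\<ge>1. (G ^^ n) x = x}"

end

(*
  The space consists of a fixed point Fix, a copy Odo of the dyadic odometer, and countably many
  further copies of the Cantor space of bit sequences, the slices Pre k and Post j. The map acts as
  the odometer on every code and moves the slices along Pre (k + 1), Pre k, ..., Pre 0, Post 0,
  Post 1, ..., so backward orbits accumulate on the odometer and forward orbits on Fix. Hence Fix
  is the only periodic point, and the slice Post 0 never returns to itself, which rules out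
  transitivity.

  The difficulty is the LRS property, since the odometer is an isometry of the usual 2-adic
  metric. We use an ultrametric 1 / (1 + closeness) in which codes agreeing on exactly a bits have
  closeness level a w, a number in [a, a + 1) that grows under the odometer unless the first a bits
  of w take one bad value; every code is bad at only finitely many levels. A point Pre k w is cut
  off from the odometer at a level cap_level k w close to log2 k, and the cap drops along the map
  only when the code passes a bad level, so closeness also grows near the odometer. Finally the
  system is embedded in the plane, where compactness identifies the metric topology with the
  Euclidean one.
*)

theory Submission
  imports Defs "HOL-Library.Discrete_Functions"
begin

lemma mod_add_eq_right_iff:
  fixes a r M :: int
  assumes "0 \<le> a" "a < M" "0 \<le> r" "r < M"
  shows "(a + r) mod M = r \<longleftrightarrow> a = 0"
proof -
  have "(a + r) mod M = r \<longleftrightarrow> (a + r) mod M = (0 + r) mod M" using assms(3,4) by simp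
  also have "\<dots> \<longleftrightarrow> M dvd a" by (simp add: mod_eq_dvd_iff)
  also have "\<dots> \<longleftrightarrow> a = 0" using assms(1,2) zdvd_not_zless[of a M] by (metis dvd_0_right le_less)
  finally show ?thesis .
qed

lemma inverse_Suc_gap:
  assumes "j \<noteq> j'"
  shows "1 / (real (Suc j) * real (Suc (Suc j))) \<le> \<bar>1 / real (Suc j) - 1 / real (Suc j')\<bar>"
proof (cases "j < j'")
  case True
  then have "1 / real (Suc j') \<le> 1 / real (Suc (Suc j))" by (intro divide_left_mono) auto
  moreover have
    "1 / real (Suc j) - 1 / real (Suc (Suc j)) = 1 / (real (Suc j) * real (Suc (Suc j)))"
    by (simp add: field_simps)
  ultimately show ?thesis by simp
next
  case False
  with assms obtain i where i: "j = Suc i" "j' \<le> i" by (cases j) auto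
  then have "1 / real (Suc i) \<le> 1 / real (Suc j')" by (intro divide_left_mono) auto
  moreover have "1 / real (Suc i) - 1 / real (Suc j) = 1 / (real (Suc i) * real (Suc j))"
    using i by (simp add: field_simps)
  moreover have "1 / (real (Suc j) * real (Suc (Suc j))) \<le> 1 / (real (Suc i) * real (Suc j))"
    using i by (intro divide_left_mono mult_mono) auto
  ultimately show ?thesis by simp
qed

lemma inverse_Suc_gap_le: "1 / (real (Suc j) * real (Suc (Suc j))) \<le> 1 / real (Suc j)"
  by (intro divide_left_mono) auto

context Metric_space
begin

lemma mtopology_eq_of_compact:
  assumes "topspace X = M" "compact_space X" "continuous_map X mtopology id"
  shows "mtopology = X"
proof -
  have "homeomorphic_map X mtopology id"
    using assms Hausdorff_space_mtopology by (intro continuous_imp_homeomorphic_map) auto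
  then show ?thesis by simp
qed

lemma ultrametric_connectedin_subsingleton:
  assumes ultra: "\<And>x y z. x \<in> M \<Longrightarrow> y \<in> M \<Longrightarrow> z \<in> M \<Longrightarrow> d x z \<le> max (d x y) (d y z)"
    and "connectedin mtopology S"
  shows "\<exists>a. S \<subseteq> {a}"
proof (rule ccontr)
  assume "\<nexists>a. S \<subseteq> {a}"
  then obtain u v where uv: "u \<in> S" "v \<in> S" "u \<noteq> v" by blast
  have "S \<subseteq> M" using assms(2) connectedin_subset_topspace by fastforce
  then have "u \<in> M" "v \<in> M" using uv by auto
  define r where "r = d u v"
  have "0 < r" using \<open>u \<in> M\<close> \<open>v \<in> M\<close> uv(3) by (simp add: r_def)
  have "openin mtopology (M - mball u r)"
    unfolding openin_mtopology
  proof (intro conjI allI impI)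
    show "M - mball u r \<subseteq> M" by blast
    fix y assume y: "y \<in> M - mball u r"
    have "mball y r \<subseteq> M - mball u r"
    proof
      fix z assume "z \<in> mball y r"
      then have "z \<in> M" "d y z < r" by auto
      moreover have "r \<le> d u y" using y \<open>u \<in> M\<close> by auto
      moreover have "d u y \<le> max (d u z) (d z y)" using ultra \<open>u \<in> M\<close> y \<open>z \<in> M\<close> by blast
      ultimately show "z \<in> M - mball u r" by (auto simp: commute)
    qed
    then show "\<exists>s>0. mball y s \<subseteq> M - mball u r" using \<open>0 < r\<close> by blast
  qed
  moreover have "S \<subseteq> mball u r \<union> (M - mball u r)" using \<open>S \<subseteq> M\<close> by blast
  moreover have "u \<in> mball u r \<inter> S" "v \<in> (M - mball u r) \<inter> S"
    using uv \<open>u \<in> M\<close> \<open>v \<in> M\<close> \<open>0 < r\<close> by (auto simp: r_def)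
  ultimately show False
    using assms(2) openin_mball[of u r] unfolding connectedin by blast
qed

lemma LRS_imp_continuous_map:
  assumes "LRS M d f" "f ` M \<subseteq> M"
  shows "continuous_map mtopology mtopology f"
  unfolding continuous_map_to_metric
proof (intro ballI allI impI)
  fix x and \<epsilon> :: real assume "x \<in> topspace mtopology" "0 < \<epsilon>"
  then have "x \<in> M" by simp
  then obtain \<delta> where "\<delta> > 0" and \<delta>: "\<forall>y\<in>M. 0 < d x y \<and> d x y < \<delta> \<longrightarrow> d (f x) (f y) < d x y"
    using assms(1) unfolding LRS_def by blast
  have "f y \<in> mball (f x) \<epsilon>" if "y \<in> mball x (min \<epsilon> \<delta>)" for y
  proof (cases "y = x")
    case False
    then have "d (f x) (f y) < d x y" using that \<delta> by auto
    then show ?thesis using that assms(2) by auto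
  qed (use \<open>x \<in> M\<close> \<open>0 < \<epsilon>\<close> assms(2) in auto)
  then show "\<exists>U. openin mtopology U \<and> x \<in> U \<and> (\<forall>y\<in>U. f y \<in> mball (f x) \<epsilon>)"
    using \<open>x \<in> M\<close> \<open>0 < \<epsilon>\<close> \<open>\<delta> > 0\<close> by (intro exI[of _ "mball x (min \<epsilon> \<delta>)"]) auto
qed

end

lemma islimpt_of_mtopology_eq:
  fixes M :: "'a::topological_space set"
  assumes "Metric_space M d" "Metric_space.mtopology M d = top_of_set M" "x \<in> M"
    and perfect: "\<And>r. 0 < r \<Longrightarrow> \<exists>y\<in>M. y \<noteq> x \<and> d x y < r"
  shows "x islimpt M"
  unfolding islimpt_def
proof (intro allI impI)
  interpret Metric_space M d by fact
  fix T assume "x \<in> T" "open T"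
  then have "openin mtopology (M \<inter> T)" using assms(2) by (simp add: openin_open_Int)
  then obtain r where "r > 0" "mball x r \<subseteq> M \<inter> T"
    using \<open>x \<in> T\<close> \<open>x \<in> M\<close> unfolding openin_mtopology by blast
  with perfect[of r] \<open>x \<in> M\<close> show "\<exists>y\<in>M. y \<in> T \<and> y \<noteq> x" by fastforce
qed

section \<open>The dyadic odometer\<close>

type_synonym bits = "nat \<Rightarrow> bool"

(* Adding one with carry, reading w as the 2-adic integer with digits w 0, w 1, ... *)
definition odo :: "bits \<Rightarrow> bits" where
  "odo w = (\<lambda>i. if \<forall>j<i. w j then \<not> w i else w i)"

definition odo_inv :: "bits \<Rightarrow> bits" where
  "odo_inv w = (\<lambda>i. if \<forall>j<i. \<not> w j then \<not> w i else w i)"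

lemma odo_prefix_False_iff: "(\<forall>j<i. \<not> odo w j) \<longleftrightarrow> (\<forall>j<i. w j)"
proof (induction i)
  case (Suc i)
  have "(\<forall>j<Suc i. \<not> odo w j) \<longleftrightarrow> (\<forall>j<i. \<not> odo w j) \<and> \<not> odo w i"
    using less_Suc_eq by auto
  also have "\<dots> \<longleftrightarrow> (\<forall>j<i. w j) \<and> w i"
    using Suc by (auto simp: odo_def)
  also have "\<dots> \<longleftrightarrow> (\<forall>j<Suc i. w j)"
    using less_Suc_eq by auto
  finally show ?case .
qed simp

lemma odo_inv_prefix_True_iff: "(\<forall>j<i. odo_inv w j) \<longleftrightarrow> (\<forall>j<i. \<not> w j)"
proof (induction i)
  case (Suc i)
  have "(\<forall>j<Suc i. odo_inv w j) \<longleftrightarrow> (\<forall>j<i. odo_inv w j) \<and> odo_inv w i"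
    using less_Suc_eq by auto
  also have "\<dots> \<longleftrightarrow> (\<forall>j<i. \<not> w j) \<and> \<not> w i"
    using Suc by (auto simp: odo_inv_def)
  also have "\<dots> \<longleftrightarrow> (\<forall>j<Suc i. \<not> w j)"
    using less_Suc_eq by auto
  finally show ?case .
qed simp

lemma odo_odo_inv [simp]: "odo (odo_inv w) = w"
proof
  fix i
  show "odo (odo_inv w) i = w i"
    unfolding odo_def using odo_inv_prefix_True_iff[of i w] by (auto simp: odo_inv_def)
qed

lemma odo_inv_odo [simp]: "odo_inv (odo w) = w"
proof
  fix i
  show "odo_inv (odo w) i = w i"
    unfolding odo_inv_def using odo_prefix_False_iff[of i w] by (auto simp: odo_def)
qed

lemma odo_eq_iff_at: "\<forall>j<i. w j = w' j \<Longrightarrow> odo w i = odo w' i \<longleftrightarrow> w i = w' i"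
  unfolding odo_def by auto

lemma odo_prefix_eq: "\<forall>j<i. w j = w' j \<Longrightarrow> \<forall>j<i. odo w j = odo w' j"
  using odo_eq_iff_at by (metis order.strict_trans)

definition first_diff :: "bits \<Rightarrow> bits \<Rightarrow> nat" where
  "first_diff w w' = (LEAST i. w i \<noteq> w' i)"

lemma first_diff_prefix_eq: "i < first_diff w w' \<Longrightarrow> w i = w' i"
  unfolding first_diff_def using not_less_Least by blast

lemma first_diff_neq: "w \<noteq> w' \<Longrightarrow> w (first_diff w w') \<noteq> w' (first_diff w w')"
  unfolding first_diff_def by (rule LeastI_ex) blast

lemma first_diff_ge: "(\<forall>i<n. w i = w' i) \<Longrightarrow> w \<noteq> w' \<Longrightarrow> n \<le> first_diff w w'"
  using first_diff_neq not_less by blast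

lemma first_diff_sym: "first_diff w w' = first_diff w' w"
  unfolding first_diff_def by (simp add: eq_commute)

lemma first_diff_ultra:
  "w \<noteq> w'' \<Longrightarrow> min (first_diff w w') (first_diff w' w'') \<le> first_diff w w''"
  using first_diff_neq[of w w''] first_diff_prefix_eq[of _ w w'] first_diff_prefix_eq[of _ w' w'']
  by (fastforce simp: not_less)

lemma first_diff_odo: "w \<noteq> w' \<Longrightarrow> first_diff (odo w) (odo w') = first_diff w w'"
proof -
  assume ne: "w \<noteq> w'"
  have ag: "\<forall>j<first_diff w w'. w j = w' j" using first_diff_prefix_eq by blast
  have d: "odo w (first_diff w w') \<noteq> odo w' (first_diff w w')"
    using odo_eq_iff_at[OF ag] first_diff_neq[OF ne] by simp
  have "\<forall>j<first_diff w w'. odo w j = odo w' j" using odo_prefix_eq[OF ag] .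
  then show ?thesis using d unfolding first_diff_def
    by (intro Least_equality) (auto simp: not_less[symmetric])
qed

lemma first_diff_flip: "first_diff w (w(n := \<not> w n)) = n"
  unfolding first_diff_def by (rule Least_equality) (auto split: if_splits)

definition prefix_val :: "nat \<Rightarrow> bits \<Rightarrow> nat" where
  "prefix_val L w = (\<Sum>i<L. if w i then 2^i else 0)"

lemma prefix_val_Suc: "prefix_val (Suc L) w = prefix_val L w + (if w L then 2^L else 0)"
  by (simp add: prefix_val_def)

lemma prefix_val_less: "prefix_val L w < 2^L"
  by (induction L) (auto simp: prefix_val_Suc prefix_val_def[of 0])

lemma prefix_val_cong: "\<forall>i<L. w i = w' i \<Longrightarrow> prefix_val L w = prefix_val L w'"
  unfolding prefix_val_def by (rule sum.cong) auto

lemma prefix_val_all_True_iff: "(\<forall>j<L. w j) \<longleftrightarrow> prefix_val L w = 2^L - 1"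
proof (induction L)
  case (Suc L)
  have "prefix_val L w < 2^L" by (rule prefix_val_less)
  then show ?case
  proof (cases "w L")
    case False
    then show ?thesis using \<open>prefix_val L w < 2^L\<close> by (auto simp: prefix_val_Suc)
  qed (use Suc in \<open>auto simp: prefix_val_Suc less_Suc_eq\<close>)
qed (simp add: prefix_val_def)

lemma prefix_val_odo: "prefix_val L (odo w) = (prefix_val L w + 1) mod 2^L"
proof (induction L)
  case (Suc L)
  define v where "v = prefix_val L w"
  have "v < 2^L" by (simp add: v_def prefix_val_less)
  show ?case
  proof (cases "\<forall>j<L. w j")
    case True
    then have "v + 1 = 2^L" "odo w L = (\<not> w L)"
      using prefix_val_all_True_iff[of L w] \<open>v < 2^L\<close> by (auto simp: v_def odo_def)
    moreover have "prefix_val L (odo w) = 0" using Suc \<open>v + 1 = 2^L\<close> by (simp add: v_def)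
    ultimately have "prefix_val (Suc L) (odo w) = (if w L then 0 else 2^L)"
      by (simp add: prefix_val_Suc)
    moreover have "prefix_val (Suc L) w + 1 = (if w L then 2 * 2^L else 2^L)"
      using \<open>v + 1 = 2^L\<close> by (simp add: prefix_val_Suc flip: v_def)
    ultimately show ?thesis by simp
  next
    case False
    then have "v + 1 < 2^L" "odo w L = w L"
      using prefix_val_all_True_iff[of L w] \<open>v < 2^L\<close> by (auto simp: v_def odo_def)
    with Suc show ?thesis by (simp add: prefix_val_Suc v_def)
  qed
qed (simp add: prefix_val_def)

lemma prefix_val_mod: "a \<le> b \<Longrightarrow> prefix_val a z = prefix_val b z mod 2^a"
proof (induction b)
  case (Suc b)
  show ?case
  proof (cases "a = Suc b")
    case True
    then show ?thesis using prefix_val_less[of a z] by simp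
  next
    case False
    then have "a \<le> b" using Suc by simp
    then have "(2::nat)^a dvd 2^b" by (rule le_imp_power_dvd)
    then have "(prefix_val b z + (if z b then 2^b else 0)) mod 2^a = prefix_val b z mod 2^a"
      by auto
    then show ?thesis using Suc \<open>a \<le> b\<close> by (simp add: prefix_val_Suc)
  qed
qed (simp add: prefix_val_def)

lemma prefix_val_odo_pow: "prefix_val L ((odo ^^ n) w) = (prefix_val L w + n) mod 2^L"
  by (induction n) (simp_all add: prefix_val_less prefix_val_odo mod_Suc_eq)

lemma odo_pow_no_fixpoint: "n \<ge> 1 \<Longrightarrow> (odo ^^ n) z \<noteq> z"
proof
  assume "n \<ge> 1" "(odo ^^ n) z = z"
  then have "(prefix_val n z + n) mod 2^n = (prefix_val n z + 0) mod 2^n"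
    using prefix_val_odo_pow[of n n z] by (simp add: prefix_val_less)
  then have "(2::nat)^n dvd (prefix_val n z + n) - prefix_val n z"
    using mod_eq_dvd_iff_nat[of "prefix_val n z" "prefix_val n z + n" "2^n"] by simp
  then have "(2::nat)^n dvd n" by simp
  moreover have "n < 2^n" by (rule less_exp)
  ultimately show False using \<open>n \<ge> 1\<close> by (simp add: nat_dvd_not_less)
qed

definition cantor_digit :: "bits \<Rightarrow> nat \<Rightarrow> real" where
  "cantor_digit w i = (if w i then 2 * (1/3)^Suc i else 0)"

definition cantor_weight :: "nat \<Rightarrow> real" where "cantor_weight i = 2 * (1/3)^Suc i"

definition cantor_map :: "bits \<Rightarrow> real" where "cantor_map w = suminf (cantor_digit w)"

lemma summable_cantor_weight: "summable cantor_weight"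
  unfolding cantor_weight_def by (intro summable_mult summable_mult2) (simp add: summable_geometric)

lemma suminf_cantor_weight: "suminf cantor_weight = 1"
proof -
  have "cantor_weight = (\<lambda>i. (2/3) * (1/3)^i)" by (auto simp: cantor_weight_def)
  moreover have "suminf (\<lambda>i. (2/3::real) * (1/3)^i) = (2/3) * suminf (\<lambda>i. (1/3::real)^i)"
    by (rule suminf_mult) (simp add: summable_geometric)
  moreover have "suminf (\<lambda>i. (1/3::real)^i) = 3/2"
    using suminf_geometric[of "1/3::real"] by simp
  ultimately show ?thesis by simp
qed

lemma suminf_cantor_weight_tail: "(\<Sum>i. cantor_weight (i + n)) = (1/3)^n"
proof -
  have "(\<lambda>i. cantor_weight (i + n)) = (\<lambda>i. (1/3)^n * cantor_weight i)"
    by (auto simp: cantor_weight_def power_add)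
  moreover have "(\<Sum>i. (1/3::real)^n * cantor_weight i) = (1/3)^n * suminf cantor_weight"
    by (rule suminf_mult) (rule summable_cantor_weight)
  ultimately show ?thesis using suminf_cantor_weight by simp
qed

lemma cantor_digit_nonneg: "0 \<le> cantor_digit w i"
  by (simp add: cantor_digit_def)

lemma cantor_digit_le: "cantor_digit w i \<le> cantor_weight i"
  by (simp add: cantor_digit_def cantor_weight_def)

lemma summable_cantor_digit: "summable (cantor_digit w)"
proof (rule summable_comparison_test[OF _ summable_cantor_weight])
  show "\<exists>N. \<forall>n\<ge>N. norm (cantor_digit w n) \<le> cantor_weight n"
    using cantor_digit_nonneg cantor_digit_le by auto
qed

lemma summable_cantor_digit_tail: "summable (\<lambda>i. cantor_digit w (i + n))"
  using summable_cantor_digit summable_iff_shift by blast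

lemma cantor_digit_tail_bounds:
  "0 \<le> (\<Sum>i. cantor_digit w (i + n))" "(\<Sum>i. cantor_digit w (i + n)) \<le> (1/3)^n"
proof -
  show "0 \<le> (\<Sum>i. cantor_digit w (i + n))"
    by (rule suminf_nonneg[OF summable_cantor_digit_tail]) (simp add: cantor_digit_nonneg)
  have "(\<Sum>i. cantor_digit w (i + n)) \<le> (\<Sum>i. cantor_weight (i + n))"
    by (rule suminf_le) (auto simp: cantor_digit_le summable_cantor_digit summable_cantor_weight)
  then show "(\<Sum>i. cantor_digit w (i + n)) \<le> (1/3)^n" using suminf_cantor_weight_tail by simp
qed

lemma cantor_map_split: "cantor_map w = (\<Sum>i<n. cantor_digit w i) + (\<Sum>i. cantor_digit w (i + n))"
  unfolding cantor_map_def
    using suminf_split_initial_segment[OF summable_cantor_digit, of w n] by simp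

lemma cantor_map_bounds: "0 \<le> cantor_map w" "cantor_map w \<le> 1"
  using cantor_map_split[of w 0] cantor_digit_tail_bounds[of w 0] by auto

lemma cantor_map_prefix_eq:
  assumes "\<forall>i<n. w i = w' i"
  shows "\<bar>cantor_map w - cantor_map w'\<bar> \<le> (1/3)^n"
proof -
  have "(\<Sum>i<n. cantor_digit w i) = (\<Sum>i<n. cantor_digit w' i)"
    using assms by (intro sum.cong) (auto simp: cantor_digit_def)
  then show ?thesis
    using cantor_map_split[of w n] cantor_map_split[of w' n]
      cantor_digit_tail_bounds[of w n] cantor_digit_tail_bounds[of w' n]
    by (simp add: abs_le_iff)
qed

lemma cantor_map_first_diff:
  assumes "\<forall>j<i. w j = w' j" "w i \<noteq> w' i"
  shows "(1/3)^Suc i \<le> \<bar>cantor_map w - cantor_map w'\<bar>"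
proof -
  let ?tail = "\<lambda>v. \<Sum>j. cantor_digit v (j + Suc i)"
  have "(\<Sum>j<i. cantor_digit w j) = (\<Sum>j<i. cantor_digit w' j)"
    using assms by (intro sum.cong) (auto simp: cantor_digit_def)
  moreover have "cantor_map v = (\<Sum>j<i. cantor_digit v j) + cantor_digit v i + ?tail v" for v
    using cantor_map_split[of v "Suc i"] by simp
  moreover have "\<bar>cantor_digit w i - cantor_digit w' i\<bar> = 2 * (1/3)^Suc i"
    using assms(2) by (auto simp: cantor_digit_def)
  ultimately show ?thesis
    using cantor_digit_tail_bounds[of w "Suc i"] cantor_digit_tail_bounds[of w' "Suc i"]
    by (simp add: abs_if split: if_splits)
qed

lemma cantor_map_close_prefix_eq:
  assumes "\<bar>cantor_map w - cantor_map w'\<bar> < (1/3)^n"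
  shows "\<forall>i<n. w i = w' i"
proof (rule ccontr)
  assume "\<not> (\<forall>i<n. w i = w' i)"
  then obtain i where i: "w i \<noteq> w' i" "i < n" "\<forall>j<i. w j = w' j"
    using exists_least_iff[of "\<lambda>i. w i \<noteq> w' i \<and> i < n"] by (metis order.strict_trans)
  have "(1/3::real)^Suc i \<le> \<bar>cantor_map w - cantor_map w'\<bar>"
    using cantor_map_first_diff i by blast
  moreover have "(1/3::real)^n \<le> (1/3)^Suc i"
    using i by (intro power_decreasing) auto
  ultimately show False using assms by linarith
qed

lemma cantor_map_inj: "cantor_map w = cantor_map w' \<Longrightarrow> w = w'"
proof (rule ccontr)
  assume "cantor_map w = cantor_map w'" "w \<noteq> w'"
  then obtain i where "w i \<noteq> w' i" by blast
  then have "\<not> (\<forall>j<Suc i. w j = w' j)" by auto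
  then have "\<not> \<bar>cantor_map w - cantor_map w'\<bar> < (1/3)^Suc i"
    using cantor_map_close_prefix_eq by blast
  then show False using \<open>cantor_map w = cantor_map w'\<close> by simp
qed

lemma compact_UNIV_bits: "compact (UNIV :: bits set)"
proof -
  have "compact_space (euclidean :: bool topology)"
    by (simp add: compact_space_def compactin_euclidean_iff finite_imp_compact)
  then have "compact_space (product_topology (\<lambda>i::nat. euclidean :: bool topology) UNIV)"
    by (simp add: compact_space_product_topology)
  then have "compact_space (euclidean :: bits topology)"
    by (simp add: euclidean_product_topology)
  then show ?thesis by (simp add: compact_space_def compactin_euclidean_iff)
qed

lemma continuous_cantor_map: "continuous_on UNIV cantor_map"
  unfolding continuous_on_topological
proof (intro ballI allI impI)
  fix w :: bits and B :: "real set"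
  assume "open B" "cantor_map w \<in> B"
  then obtain e where e: "e > 0" "ball (cantor_map w) e \<subseteq> B"
    using open_contains_ball by blast
  obtain n where n: "(1/3::real)^n < e" using real_arch_pow_inv[OF e(1), of "1/3"] by auto
  let ?A = "{v :: bits. \<forall>i\<in>{..<n}. v (id i) \<in> {w i}}"
  have "open ?A" by (rule product_topology_basis') (auto simp: open_discrete)
  moreover have "w \<in> ?A" by simp
  moreover have "\<forall>v\<in>UNIV. v \<in> ?A \<longrightarrow> cantor_map v \<in> B"
  proof (intro ballI impI)
    fix v assume "v \<in> ?A"
    then have "\<forall>i<n. v i = w i" by auto
    then have "\<bar>cantor_map v - cantor_map w\<bar> \<le> (1/3)^n" by (rule cantor_map_prefix_eq)
    then have "cantor_map v \<in> ball (cantor_map w) e" using n by (simp add: dist_real_def)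
    then show "cantor_map v \<in> B" using e by blast
  qed
  ultimately show "\<exists>A. open A \<and> w \<in> A \<and> (\<forall>v\<in>UNIV. v \<in> A \<longrightarrow> cantor_map v \<in> B)"
    by blast
qed

lemma compact_range_cantor_map: "compact (range cantor_map)"
  by (rule compact_continuous_image[OF continuous_cantor_map compact_UNIV_bits])

section \<open>Levels\<close>

(* The choice 2^(a - 1) makes every code bad at no more than one level a \<ge> 1. *)
definition bad_val :: "nat \<Rightarrow> nat" where
  "bad_val a = (if a = 0 then 0 else 2^(a - 1))"

definition offset :: "nat \<Rightarrow> bits \<Rightarrow> int" where
  "offset a w = (int (prefix_val a w) - int (bad_val a)) mod 2^a"

(* (offset a w - 1) mod 2^a ranks the prefix of length a in the cyclic order starting just after
   the bad value, so the odometer raises the level unless the prefix is bad. *)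
definition level :: "nat \<Rightarrow> bits \<Rightarrow> real" where
  "level a w = real a + real_of_int ((offset a w - 1) mod 2^a) / 2^a"

lemma bad_val_less: "bad_val a < 2^a"
  by (cases a) (auto simp: bad_val_def)

lemma offset_bounds: "0 \<le> offset a w" "offset a w < 2^a"
  by (simp_all add: offset_def)

lemma offset_odo: "offset a (odo w) = (offset a w + 1) mod 2^a"
proof -
  define p and b where "p = int (prefix_val a w)" and "b = int (bad_val a)"
  have "int (prefix_val a (odo w)) = (p + 1) mod 2^a"
    by (simp add: prefix_val_odo zmod_int p_def add.commute)
  then have "offset a (odo w) = ((p + 1) mod 2^a - b) mod 2^a"
    by (simp add: offset_def b_def)
  also have "\<dots> = (p - b + 1) mod 2^a"
    by (simp add: mod_diff_left_eq algebra_simps)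
  also have "\<dots> = ((p - b) mod 2^a + 1) mod 2^a"
    by (rule mod_add_left_eq[symmetric])
  finally show ?thesis by (simp add: offset_def p_def b_def)
qed

lemma offset_eq_0_iff: "offset a w = 0 \<longleftrightarrow> prefix_val a w = bad_val a"
proof -
  define d where "d = int (prefix_val a w) - int (bad_val a)"
  have "\<bar>d\<bar> < int (2^a)"
    using prefix_val_less[of a w] bad_val_less[of a] unfolding d_def abs_less_iff by linarith
  then have "\<bar>d\<bar> < 2^a" by simp
  have "2^a dvd d \<longleftrightarrow> d = 0"
  proof
    assume "2^a dvd d"
    show "d = 0"
    proof (rule ccontr)
      assume "d \<noteq> 0"
      then have "\<bar>2^a\<bar> \<le> \<bar>d\<bar>" using \<open>2^a dvd d\<close> by (rule dvd_imp_le_int)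
      with \<open>\<bar>d\<bar> < 2^a\<close> show False by simp
    qed
  qed simp
  then show ?thesis by (auto simp: offset_def mod_eq_0_iff_dvd d_def)
qed

lemma offset_cong: "\<forall>i<a. w i = w' i \<Longrightarrow> offset a w = offset a w'"
  using prefix_val_cong[of a w w'] by (simp add: offset_def)

lemma offset_0 [simp]: "offset 0 w = 0"
  by (simp add: offset_def)

lemma level_bounds: "real a \<le> level a w" "level a w < real a + 1"
proof -
  have "0 \<le> (offset a w - 1) mod 2^a" "(offset a w - 1) mod 2^a < 2^a" by simp_all
  then have "0 \<le> real_of_int ((offset a w - 1) mod 2^a)"
    "real_of_int ((offset a w - 1) mod 2^a) < 2^a"
    by (simp_all add: of_int_less_iff[symmetric])
  then show "real a \<le> level a w" "level a w < real a + 1"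
    by (simp_all add: level_def)
qed

lemma level_nonneg: "0 \<le> level a w"
  using level_bounds(1)[of a w] by linarith

lemma level_cong: "\<forall>i<a. w i = w' i \<Longrightarrow> level a w = level a w'"
  using offset_cong[of a w w'] by (simp add: level_def)

lemma level_less_level: "a < b \<Longrightarrow> level a w < level b w'"
proof -
  assume "a < b"
  then have "real a + 1 \<le> real b" by simp
  then show ?thesis using level_bounds[of a w] level_bounds[of b w'] by linarith
qed

lemma level_mono: "a \<le> b \<Longrightarrow> \<forall>i<a. w i = w' i \<Longrightarrow> level a w \<le> level b w'"
  using level_cong[of a w w'] level_less_level[of a b w w'] by (cases "a = b") auto

lemma level_odo_less:
  assumes "offset a w \<noteq> 0"
  shows "level a w < level a (odo w)"
proof -
  define t where "t = (offset a w - 1) mod 2^a"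
  have "(t + 1) mod 2^a = offset a w"
    unfolding t_def using offset_bounds[of a w] by (simp add: mod_add_left_eq)
  moreover have "0 \<le> t" "t < 2^a" by (simp_all add: t_def)
  moreover have "t + 1 \<noteq> 2^a"
    using \<open>(t + 1) mod 2^a = offset a w\<close> assms by auto
  ultimately have "t + 1 = offset a w" by simp
  moreover have "(offset a (odo w) - 1) mod 2^a = offset a w"
    using offset_odo[of a w] offset_bounds[of a w] by (simp add: mod_diff_left_eq)
  ultimately show ?thesis by (simp add: level_def t_def divide_strict_right_mono)
qed

lemma eventually_offset_nonzero: "\<exists>K. \<forall>a\<ge>K. offset a z \<noteq> 0"
proof (cases "\<exists>a\<ge>1. offset a z = 0")
  case True
  then obtain a0 where a0: "a0 \<ge> 1" "prefix_val a0 z = bad_val a0"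
    by (auto simp: offset_eq_0_iff)
  have "offset b z \<noteq> 0" if "a0 < b" for b
  proof
    assume "offset b z = 0"
    then have b: "prefix_val b z = 2^(b - 1)" using that by (simp add: offset_eq_0_iff bad_val_def)
    have "prefix_val a0 z = prefix_val b z mod 2^a0" using that by (intro prefix_val_mod) simp
    also have "\<dots> = 2^(b - 1) mod 2^a0" by (simp only: b)
    also have "\<dots> = 0" using that by (intro dvd_imp_mod_0 le_imp_power_dvd) simp
    finally show False using a0 by (simp add: bad_val_def)
  qed
  then show ?thesis by (intro exI[of _ "Suc a0"]) (simp add: Suc_le_eq)
next
  case False
  then show ?thesis by (intro exI[of _ "1::nat"]) auto
qed

definition slice_log :: "nat \<Rightarrow> nat" where
  "slice_log k = floor_log (Suc k)"

(* The level at which Pre k w is cut off from the odometer. It is slice_log k or slice_log k - 1,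
   chosen so that Pre (Suc k) w \<mapsto> Pre k (odo w) lowers it only at a bad level. *)
definition cap_level :: "nat \<Rightarrow> bits \<Rightarrow> nat" where
  "cap_level k w = (let L = slice_log k; r = int (Suc k) - 2^L
     in if (offset L w + r) mod 2^L \<le> r then L else L - 1)"

lemma slice_log_bounds: "2^slice_log k \<le> Suc k" "Suc k < 2 * 2^slice_log k"
  unfolding slice_log_def by (simp_all add: floor_log_exp2_le floor_log_exp2_gt)

lemma slice_log_mono: "k \<le> k' \<Longrightarrow> slice_log k \<le> slice_log k'"
  unfolding slice_log_def by (intro floor_log_le_iff) simp

lemma cap_level_0 [simp]: "cap_level 0 w = 0"
  by (simp add: cap_level_def slice_log_def)

lemma cap_level_bounds: "cap_level k w \<le> slice_log k" "slice_log k \<le> cap_level k w + 1"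
  by (auto simp: cap_level_def Let_def)

lemma cap_level_cong: "\<forall>i<slice_log k. w i = w' i \<Longrightarrow> cap_level k w = cap_level k w'"
  using offset_cong[of "slice_log k" w w'] by (simp add: cap_level_def)

lemma cap_level_end_of_block:
  assumes "Suc (Suc k) = 2 * 2^slice_log k"
  shows "cap_level k w = slice_log k"
proof -
  define L where "L = slice_log k"
  have "int (Suc (Suc k)) = 2 * 2^L"
    using assms unfolding L_def by (metis of_nat_numeral of_nat_power of_nat_mult)
  then have r: "int (Suc k) - 2^L = 2^L - 1" by simp
  have "x mod 2^L \<le> 2^L - 1" for x :: int
    using pos_mod_bound[of "2^L" x] by simp
  moreover have "cap_level k w =
      (if (offset L w + (int (Suc k) - 2^L)) mod 2^L \<le> int (Suc k) - 2^L then L else L - 1)"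
    by (simp only: cap_level_def Let_def L_def)
  ultimately have "cap_level k w = L" by (simp only: r if_True)
  then show ?thesis by (simp add: L_def)
qed

lemma cap_level_step:
  "cap_level (Suc k) w = cap_level k (odo w) \<or>
   cap_level (Suc k) w = cap_level k (odo w) + 1 \<and> offset (cap_level (Suc k) w) w = 0"
proof -
  define L where "L = slice_log (Suc k)"
  define r :: int where "r = int (Suc (Suc k)) - 2^L"
  define q where "q = (offset L w + r) mod 2^L"
  have L_bounds: "2^L \<le> Suc (Suc k)" "Suc (Suc k) < 2 * 2^L"
    using slice_log_bounds[of "Suc k"] by (simp_all add: L_def)
  have "r = int (Suc (Suc k)) - int (2^L)" by (simp add: r_def)
  then have r_eq_0: "r = 0 \<longleftrightarrow> Suc (Suc k) = 2^L" by (metis eq_iff_diff_eq_0 of_nat_eq_iff)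
  have "int (2^L) \<le> int (Suc (Suc k))" "int (Suc (Suc k)) < int (2 * 2^L)"
    using L_bounds by (simp_all only: of_nat_le_iff of_nat_less_iff)
  then have "0 \<le> r" "r < 2^L" by (simp_all add: r_def)
  then have q_eq_r: "q = r \<longleftrightarrow> offset L w = 0"
    unfolding q_def using offset_bounds[of L w] by (intro mod_add_eq_right_iff) auto
  have cap_Suc: "cap_level (Suc k) w = (if q \<le> r then L else L - 1)"
    by (simp add: cap_level_def Let_def q_def r_def L_def)
  show ?thesis
  proof (cases "r = 0")
    case False
    then have "floor_log (Suc k) = L"
      using L_bounds r_eq_0 by (intro floor_log_eqI) (auto simp: le_Suc_eq)
    then have "cap_level k (odo w) =
        (if (offset L (odo w) + (int (Suc k) - 2^L)) mod 2^L \<le> int (Suc k) - 2^L then L else L - 1)"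
      by (simp only: cap_level_def Let_def slice_log_def)
    moreover have r': "int (Suc k) - 2^L = r - 1" by (simp add: r_def)
    moreover have q': "(offset L (odo w) + (r - 1)) mod 2^L = q"
      by (simp add: offset_odo q_def mod_add_left_eq add.assoc)
    ultimately have "cap_level k (odo w) = (if q \<le> r - 1 then L else L - 1)"
      by (simp only: r' q')
    then show ?thesis using cap_Suc q_eq_r by auto
  next
    case True
    then have L: "Suc (Suc k) = 2^L" using r_eq_0 by simp
    then obtain L' where L': "L = Suc L'" by (cases L) auto
    then have "floor_log (Suc k) = L'"
      using L one_le_power[of "2::nat" L'] by (intro floor_log_eqI) auto
    then have "cap_level k (odo w) = L'"
      using cap_level_end_of_block[of k "odo w"] L L' by (simp add: slice_log_def)
    moreover have "0 \<le> q" by (simp add: q_def)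
    then have "q \<le> r \<longleftrightarrow> q = r" using True by auto
    ultimately show ?thesis using cap_Suc q_eq_r L' by auto
  qed
qed

section \<open>The abstract system\<close>

datatype point = Fix | Odo bits | Pre nat bits | Post nat bits

fun step :: "point \<Rightarrow> point" where
  "step Fix = Fix"
| "step (Odo z) = Odo (odo z)"
| "step (Pre (Suc k) w) = Pre k (odo w)"
| "step (Pre 0 w) = Post 0 (odo w)"
| "step (Post j w) = Post (Suc j) (odo w)"

fun step_inv :: "point \<Rightarrow> point" where
  "step_inv Fix = Fix"
| "step_inv (Odo z) = Odo (odo_inv z)"
| "step_inv (Pre k w) = Pre (Suc k) (odo_inv w)"
| "step_inv (Post 0 w) = Pre 0 (odo_inv w)"
| "step_inv (Post (Suc j) w) = Post j (odo_inv w)"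

lemma step_step_inv [simp]: "step (step_inv x) = x"
  by (induction x rule: step_inv.induct) auto

lemma step_inv_step [simp]: "step_inv (step x) = x"
  by (induction x rule: step.induct) auto

lemma step_inj: "step x = step y \<Longrightarrow> x = y"
  by (metis step_inv_step)

fun odo_side :: "point \<Rightarrow> bool" where
  "odo_side (Odo _) = True" | "odo_side (Pre _ _) = True" | "odo_side _ = False"

fun fix_side :: "point \<Rightarrow> bool" where
  "fix_side Fix = True" | "fix_side (Post _ _) = True" | "fix_side _ = False"

fun code :: "point \<Rightarrow> bits" where
  "code (Odo z) = z" | "code (Pre k w) = w" | "code (Post j w) = w" | "code Fix = (\<lambda>_. False)"

fun cap :: "point \<Rightarrow> nat option" where
  "cap (Pre k w) = Some (cap_level k w)" | "cap _ = None"

fun slice_index :: "point \<Rightarrow> nat" where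
  "slice_index (Pre k w) = k" | "slice_index _ = 0"

(* A cap acts like a bit in which a Pre point differs from every other point. *)
definition splits :: "point \<Rightarrow> point \<Rightarrow> nat \<Rightarrow> bool" where
  "splits x y i \<longleftrightarrow> cap x = Some i \<or> cap y = Some i \<or> code x i \<noteq> code y i"

definition split_level :: "point \<Rightarrow> point \<Rightarrow> nat" where
  "split_level x y = (LEAST i. splits x y i)"

fun twins :: "point \<Rightarrow> point \<Rightarrow> bool" where
  "twins (Pre k w) (Pre k' w') = (k = k' \<and> (\<forall>i<slice_log k. w i = w' i))"
| "twins _ _ = False"

(* The bonus 1 / (k + 1) of twins grows along the orbit, since step lowers k. *)
definition odo_closeness :: "point \<Rightarrow> point \<Rightarrow> real" where
  "odo_closeness x y =
     (if twins x y
      then level (first_diff (code x) (code y)) (code x) + 1 / real (Suc (slice_index x))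
      else level (split_level x y) (code x))"

fun fix_closeness :: "point \<Rightarrow> point \<Rightarrow> real" where
  "fix_closeness Fix (Post j w) = 1 + real j"
| "fix_closeness (Post j w) Fix = 1 + real j"
| "fix_closeness (Post j w) (Post j' w') =
     (if j = j' then real (first_diff w w') + 2 + real j else 1 + real (min j j'))"
| "fix_closeness _ _ = 0"

definition closeness :: "point \<Rightarrow> point \<Rightarrow> real" where
  "closeness x y =
     (if odo_side x \<and> odo_side y then odo_closeness x y
      else if fix_side x \<and> fix_side y then fix_closeness x y else 0)"

definition pdist :: "point \<Rightarrow> point \<Rightarrow> real" where
  "pdist x y = (if x = y then 0 else 1 / (1 + closeness x y))"

lemma splits_sym: "splits x y i = splits y x i"
  unfolding splits_def by auto

lemma split_level_sym: "split_level x y = split_level y x"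
proof -
  have "splits x y = splits y x" by (rule ext) (rule splits_sym)
  then show ?thesis unfolding split_level_def by simp
qed

lemma split_level_below: "i < split_level x y \<Longrightarrow> \<not> splits x y i"
  unfolding split_level_def by (rule not_less_Least)

lemma split_level_le: "splits x y i \<Longrightarrow> split_level x y \<le> i"
  unfolding split_level_def by (rule Least_le)

lemma split_level_splits: "splits x y i \<Longrightarrow> splits x y (split_level x y)"
  unfolding split_level_def by (rule LeastI)

lemma split_level_le_cap: "cap x = Some l \<Longrightarrow> split_level x y \<le> l"
  by (rule split_level_le) (simp add: splits_def)

lemma split_level_ge:
  assumes "\<exists>i. splits x y i" "\<forall>i<n. \<not> splits x y i"
  shows "n \<le> split_level x y"
  using assms split_level_splits not_less by blast

lemma split_level_prefix_eq: "\<forall>i<split_level x y. code x i = code y i"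
  using split_level_below unfolding splits_def by blast

lemma ex_splits: "odo_side x \<Longrightarrow> odo_side y \<Longrightarrow> x \<noteq> y \<Longrightarrow> \<exists>i. splits x y i"
proof -
  assume a: "odo_side x" "odo_side y" "x \<noteq> y"
  show ?thesis
  proof (cases "cap x = None \<and> cap y = None")
    case True
    then obtain z z' where "x = Odo z" "y = Odo z'" using a
      by (cases x; cases y) auto
    then have "z \<noteq> z'" using a by auto
    then obtain i where "z i \<noteq> z' i" by blast
    then show ?thesis using \<open>x = Odo z\<close> \<open>y = Odo z'\<close> by (auto simp: splits_def)
  next
    case False
    then show ?thesis by (auto simp: splits_def)
  qed
qed

lemma split_level_ultra:
  assumes "\<exists>i. splits x z i"
  shows "min (split_level x y) (split_level y z) \<le> split_level x z"
proof (rule ccontr)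
  assume "\<not> ?thesis"
  then have l1: "split_level x z < split_level x y" and l2: "split_level x z < split_level y z"
    by auto
  have "splits x z (split_level x z)" using assms split_level_splits by blast
  moreover have "\<not> splits x y (split_level x z)" using l1 by (rule split_level_below)
  moreover have "\<not> splits y z (split_level x z)" using l2 by (rule split_level_below)
  ultimately show False unfolding splits_def by auto
qed

lemma split_level_shift:
  assumes ex: "\<exists>i. splits x y i"
    and c: "code x' = odo (code x)" "code y' = odo (code y)"
    and b: "\<forall>i<split_level x y. cap x' \<noteq> Some i \<and> cap y' \<noteq> Some i"
    and t: "cap x' = Some (split_level x y) \<or> cap y' = Some (split_level x y) \<or>
            code x (split_level x y) \<noteq> code y (split_level x y)"
  shows "split_level x' y' = split_level x y"
proof (rule antisym)
  have ag: "\<forall>j<split_level x y. code x j = code y j" by (rule split_level_prefix_eq)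
  show "split_level x' y' \<le> split_level x y"
  proof (rule split_level_le)
    show "splits x' y' (split_level x y)"
      using t odo_eq_iff_at[OF ag] c unfolding splits_def by auto
  qed
  show "split_level x y \<le> split_level x' y'"
  proof (rule ccontr)
    assume "\<not> split_level x y \<le> split_level x' y'"
    then have lt: "split_level x' y' < split_level x y" by simp
    have "splits x' y' (split_level x' y')"
      using split_level_splits[of x' y' "split_level x y"] t odo_eq_iff_at[OF ag] c
        unfolding splits_def by auto
    moreover have "code x (split_level x' y') = code y (split_level x' y')" using ag lt by blast
    moreover have "\<forall>j<split_level x' y'. code x j = code y j" using ag lt by auto
    ultimately show False using b lt c odo_eq_iff_at unfolding splits_def by metis
  qed
qed

lemma twinsD: "twins x y \<Longrightarrow> \<exists>k w w'. x = Pre k w \<and> y = Pre k w' \<and> (\<forall>i<slice_log k. w i = w' i)"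
  by (cases x; cases y) auto

lemma twins_sym: "twins x y \<Longrightarrow> twins y x"
  by (cases x; cases y) auto

lemma twins_trans: "twins x y \<Longrightarrow> twins y z \<Longrightarrow> twins x z"
  by (cases x; cases y; cases z) auto

lemma twins_cap: "twins x y \<Longrightarrow> cap x = cap y"
  using cap_level_cong by (cases x; cases y) auto

lemma twins_cap_split_level: "twins x y \<Longrightarrow> cap x = Some (split_level x y)"
proof -
  assume s: "twins x y"
  then obtain k w w' where kw: "x = Pre k w" "y = Pre k w'" "\<forall>i<slice_log k. w i = w' i"
    using twinsD by blast
  have cy: "cap y = Some (cap_level k w)" using twins_cap[OF s] kw by simp
  have "split_level x y \<le> cap_level k w" using kw by (intro split_level_le_cap) simp
  moreover have "cap_level k w \<le> split_level x y"
  proof (rule ccontr)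
    assume "\<not> cap_level k w \<le> split_level x y"
    then have lt: "split_level x y < cap_level k w" by simp
    have "splits x y (split_level x y)"
      by (rule split_level_splits[of _ _ "cap_level k w"]) (simp add: splits_def kw)
    moreover have "split_level x y < slice_log k" using lt cap_level_bounds[of k w] by linarith
    ultimately show False using kw cy lt by (auto simp: splits_def)
  qed
  ultimately show ?thesis using kw by simp
qed

lemma odo_closeness_nonneg: "0 \<le> odo_closeness x y"
  unfolding odo_closeness_def using level_nonneg by (auto intro: add_nonneg_nonneg)

lemma closeness_nonneg: "0 \<le> closeness x y"
proof -
  have "0 \<le> fix_closeness x y" by (induction x y rule: fix_closeness.induct) auto
  then show ?thesis using odo_closeness_nonneg by (simp add: closeness_def)
qed

lemma odo_closeness_sym: "x \<noteq> y \<Longrightarrow> odo_closeness x y = odo_closeness y x"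
proof -
  assume ne: "x \<noteq> y"
  show ?thesis
  proof (cases "twins x y")
    case True
    then have s2: "twins y x" by (rule twins_sym)
    obtain k w w' where kw: "x = Pre k w" "y = Pre k w'" using True twinsD by blast
    have "level (first_diff w w') w = level (first_diff w w') w'"
      using first_diff_prefix_eq by (intro level_cong) blast
    then show ?thesis using True s2 kw by (simp add: odo_closeness_def first_diff_sym)
  next
    case False
    then have s2: "\<not> twins y x" using twins_sym by blast
    have "level (split_level x y) (code x) = level (split_level x y) (code y)"
      using split_level_prefix_eq by (intro level_cong) blast
    then show ?thesis using False s2 by (simp add: odo_closeness_def split_level_sym)
  qed
qed

lemma fix_closeness_sym: "fix_closeness x y = fix_closeness y x"
  by (induction x y rule: fix_closeness.induct) (auto simp: first_diff_sym min.commute)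

lemma closeness_sym: "x \<noteq> y \<Longrightarrow> closeness x y = closeness y x"
  using odo_closeness_sym fix_closeness_sym by (auto simp: closeness_def)

lemma odo_closeness_le_cap:
  "\<not> twins x y \<Longrightarrow> cap x = Some l \<Longrightarrow> odo_closeness x y \<le> level l (code x)"
  unfolding odo_closeness_def using split_level_le_cap level_mono by auto

lemma odo_closeness_twins_gt_cap:
  "twins x y \<Longrightarrow> x \<noteq> y \<Longrightarrow> cap x = Some l \<Longrightarrow> level l (code x) < odo_closeness x y"
proof -
  assume s: "twins x y" "x \<noteq> y" "cap x = Some l"
  then obtain k w w' where kw: "x = Pre k w" "y = Pre k w'" "\<forall>i<slice_log k. w i = w' i"
    using twinsD by blast
  have "l \<le> slice_log k" using s kw cap_level_bounds by auto
  also have "slice_log k \<le> first_diff w w'" using kw s(2) by (intro first_diff_ge) auto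
  finally have "level l w \<le> level (first_diff w w') w" by (intro level_mono) auto
  moreover have "0 < 1 / (1 + real k)" by simp
  moreover have "odo_closeness x y = level (first_diff w w') w + 1 / (1 + real k)"
    using s kw by (simp add: odo_closeness_def)
  ultimately show ?thesis unfolding kw code.simps by linarith
qed

lemma level_ultra:
  assumes "min a b \<le> c" "\<forall>i<a. u i = v i"
  shows "min (level a u) (level b v) \<le> level c u"
proof (cases "a \<le> b")
  case True
  then show ?thesis using assms by (simp add: level_mono)
next
  case False
  then have "level b v = level b u" using assms(2) by (intro level_cong) auto
  also have "\<dots> \<le> level c u" using False assms(1) by (intro level_mono) auto
  finally show ?thesis by simp
qed

lemma odo_closeness_ultra:
  assumes "odo_side x" "odo_side y" "odo_side z" "x \<noteq> y" "y \<noteq> z" "x \<noteq> z"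
  shows "min (odo_closeness x y) (odo_closeness y z) \<le> odo_closeness x z"
proof -
  have min_split: "min (split_level x y) (split_level y z) \<le> split_level x z"
    using split_level_ultra ex_splits assms by blast
  consider (tt) "twins x y" "twins y z" | (tn) "twins x y" "\<not> twins y z"
    | (nt) "\<not> twins x y" "twins y z" | (nnt) "\<not> twins x y" "\<not> twins y z" "twins x z"
    | (nnn) "\<not> twins x y" "\<not> twins y z" "\<not> twins x z" by blast
  then show ?thesis
  proof cases
    case tt
    then obtain k w w' w'' where xyz: "x = Pre k w" "y = Pre k w'" "z = Pre k w''"
      by (metis twinsD point.inject(2))
    then have "min (first_diff w w') (first_diff w' w'') \<le> first_diff w w''"
      using assms by (intro first_diff_ultra) auto
    then have "min (level (first_diff w w') w) (level (first_diff w' w'') w')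
        \<le> level (first_diff w w'') w"
      using first_diff_prefix_eq by (intro level_ultra) auto
    then show ?thesis using tt twins_trans[OF tt] xyz by (simp add: odo_closeness_def)
  next
    case tn
    then obtain l where "cap x = Some l" "cap y = Some l" "split_level x y = l"
      using twins_cap twins_cap_split_level by (metis option.collapse)
    then have "split_level y z \<le> split_level x z"
      using min_split split_level_le_cap[of y l z] by linarith
    moreover have "\<forall>i<split_level y z. code y i = code x i"
      using split_level_prefix_eq[of x y] split_level_le_cap[of y l z] \<open>cap y = Some l\<close>
        \<open>split_level x y = l\<close> by auto
    ultimately have "level (split_level y z) (code y) \<le> level (split_level x z) (code x)"
      by (metis level_cong level_mono)
    moreover have "\<not> twins x z" using tn twins_trans twins_sym by blast
    ultimately show ?thesis using tn by (simp add: odo_closeness_def)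
  next
    case nt
    then obtain l where "cap y = Some l" "split_level y z = l"
      using twins_cap_split_level by blast
    then have "split_level x y \<le> split_level x z"
      using min_split split_level_le_cap[of y l x] by (simp add: split_level_sym)
    then have "level (split_level x y) (code x) \<le> level (split_level x z) (code x)"
      by (intro level_mono) auto
    moreover have "\<not> twins x z" using nt twins_trans twins_sym by blast
    ultimately show ?thesis using nt by (simp add: odo_closeness_def)
  next
    case nnt
    then obtain l where "cap x = Some l"
      using twins_cap_split_level by blast
    then have "odo_closeness x y \<le> level l (code x)" by (rule odo_closeness_le_cap[OF nnt(1)])
    also have "\<dots> < odo_closeness x z"
      by (rule odo_closeness_twins_gt_cap[OF nnt(3) \<open>x \<noteq> z\<close> \<open>cap x = Some l\<close>])
    finally show ?thesis by simp
  next
    case nnn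
    have "min (level (split_level x y) (code x)) (level (split_level y z) (code y))
        \<le> level (split_level x z) (code x)"
      using min_split split_level_prefix_eq by (intro level_ultra) auto
    then show ?thesis using nnn by (simp add: odo_closeness_def)
  qed
qed

lemma fix_closeness_ultra:
  assumes "fix_side x" "fix_side y" "fix_side z" "x \<noteq> y" "y \<noteq> z" "x \<noteq> z"
  shows "min (fix_closeness x y) (fix_closeness y z) \<le> fix_closeness x z"
proof (cases "x = Fix \<or> y = Fix \<or> z = Fix")
  case True
  then show ?thesis using assms by (cases x; cases y; cases z) auto
next
  case False
  then obtain j w j' w' j'' w'' where xyz: "x = Post j w" "y = Post j' w'" "z = Post j'' w''"
    using assms by (cases x; cases y; cases z) auto
  then show ?thesis using first_diff_ultra[of w w'' w'] assms by auto
qed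

lemma closeness_ultra:
  assumes d: "x \<noteq> y" "y \<noteq> z" "x \<noteq> z"
  shows "min (closeness x y) (closeness y z) \<le> closeness x z"
proof -
  have side: "odo_side u \<or> fix_side u" for u by (cases u) auto
  have nb: "\<not> (odo_side u \<and> fix_side u)" for u by (cases u) auto
  show ?thesis
  proof (cases "odo_side x \<and> odo_side y \<and> odo_side z")
    case True then show ?thesis using odo_closeness_ultra d by (simp add: closeness_def)
  next
    case F1: False
    show ?thesis
    proof (cases "fix_side x \<and> fix_side y \<and> fix_side z")
      case True
      then have "\<not> odo_side x" "\<not> odo_side y" "\<not> odo_side z" using nb by auto
      then show ?thesis using fix_closeness_ultra d True by (simp add: closeness_def)
    next
      case False
      then have "closeness x y = 0 \<or> closeness y z = 0"
        using F1 side nb by (auto simp: closeness_def)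
      then show ?thesis
        using closeness_nonneg[of x z] closeness_nonneg[of x y] closeness_nonneg[of y z] by linarith
    qed
  qed
qed

lemma pdist_nonneg: "0 \<le> pdist x y"
  using closeness_nonneg[of x y] by (simp add: pdist_def)

lemma pdist_sym: "pdist x y = pdist y x"
  using closeness_sym by (simp add: pdist_def)

lemma pdist_eq_0_iff: "pdist x y = 0 \<longleftrightarrow> x = y"
  using closeness_nonneg[of x y] by (simp add: pdist_def)

lemma pdist_ultra: "pdist x z \<le> max (pdist x y) (pdist y z)"
proof (cases "x = y \<or> y = z \<or> x = z")
  case True
  then show ?thesis using pdist_nonneg[of x y] pdist_nonneg[of y z] pdist_eq_0_iff[of x x]
    by (auto simp: max_def)
next
  case False
  have antitone: "0 \<le> c \<Longrightarrow> c \<le> c' \<Longrightarrow> 1 / (1 + c') \<le> 1 / (1 + c)" for c c' :: real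
    by (intro divide_left_mono) auto
  have "min (closeness x y) (closeness y z) \<le> closeness x z"
    using False by (intro closeness_ultra) auto
  then have "1 / (1 + closeness x z) \<le> max (1 / (1 + closeness x y)) (1 / (1 + closeness y z))"
    using antitone closeness_nonneg[of x y] closeness_nonneg[of y z]
    by (auto simp: min_le_iff_disj le_max_iff_disj)
  then show ?thesis using False by (simp add: pdist_def)
qed

lemma pdist_triangle: "pdist x z \<le> pdist x y + pdist y z"
  using pdist_ultra[of x z y] pdist_nonneg[of x y] pdist_nonneg[of y z] by linarith

section \<open>Expansion of closeness\<close>

definition step_expands_at :: "point \<Rightarrow> bool" where
  "step_expands_at x \<longleftrightarrow>
     (\<exists>T. \<forall>y. y \<noteq> x \<longrightarrow> T < closeness x y \<longrightarrow> closeness x y < closeness (step x) (step y))"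

lemma closeness_odo_side: "0 < closeness x y \<Longrightarrow> odo_side x \<Longrightarrow> odo_side y"
  by (cases x; cases y) (auto simp: closeness_def)

lemma step_expands_at_Fix: "step_expands_at Fix"
  unfolding step_expands_at_def
proof (intro exI allI impI)
  fix y assume "0 < closeness Fix y"
  then obtain j w where "y = Post j w" by (cases y) (auto simp: closeness_def)
  then show "closeness Fix y < closeness (step Fix) (step y)" by (simp add: closeness_def)
qed

lemma step_expands_at_Post: "step_expands_at (Post j w)"
  unfolding step_expands_at_def
proof (intro exI allI impI)
  fix y assume ne: "y \<noteq> Post j w" and gt: "1 + real j < closeness (Post j w) y"
  then obtain w' where y: "y = Post j w'" "w \<noteq> w'"
    by (cases y) (auto simp: closeness_def split: if_splits)
  then have "first_diff (odo w) (odo w') = first_diff w w'" by (intro first_diff_odo)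
  then show "closeness (Post j w) y < closeness (step (Post j w)) (step y)"
    using y by (simp add: closeness_def)
qed

lemma step_expands_at_Pre: "step_expands_at (Pre k w)"
  unfolding step_expands_at_def
proof -
  obtain K where K: "\<forall>a\<ge>K. offset a w \<noteq> 0" using eventually_offset_nonzero by blast
  define T where "T = max (level (cap_level k w) w) (real K + 1)"
  show "\<exists>T. \<forall>y. y \<noteq> Pre k w \<longrightarrow> T < closeness (Pre k w) y \<longrightarrow>
          closeness (Pre k w) y < closeness (step (Pre k w)) (step y)"
  proof (intro exI[of _ T] allI impI)
    fix y assume ne: "y \<noteq> Pre k w" and gt: "T < closeness (Pre k w) y"
    then have "odo_side y" using closeness_odo_side[of "Pre k w" y] by (simp add: T_def)
    then have closeness_eq: "closeness (Pre k w) y = odo_closeness (Pre k w) y"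
      by (simp add: closeness_def)
    have "twins (Pre k w) y"
      using gt odo_closeness_le_cap[of "Pre k w" y "cap_level k w"]
        by (auto simp: closeness_eq T_def)
    then obtain w' where y: "y = Pre k w'" and prefix: "\<forall>i<slice_log k. w i = w' i"
      by (cases y) auto
    define a where "a = first_diff w w'"
    have "w \<noteq> w'" using ne y by simp
    then have first_diff_step: "first_diff (odo w) (odo w') = a"
      using first_diff_odo by (simp add: a_def)
    have closeness_y: "closeness (Pre k w) y = level a w + 1 / real (Suc k)"
      using \<open>twins (Pre k w) y\<close> y by (simp add: closeness_def odo_closeness_def a_def)
    have "real K + 1 < level a w + 1 / real (Suc k)" using gt closeness_y by (simp add: T_def)
    moreover have "1 / real (Suc k) \<le> 1" by simp
    ultimately have "real K < real a + 1" using level_bounds(2)[of a w] by linarith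
    then have "offset a w \<noteq> 0" using K by simp
    show "closeness (Pre k w) y < closeness (step (Pre k w)) (step y)"
    proof (cases k)
      case 0
      then show ?thesis
        using y first_diff_step closeness_y level_bounds(2)[of a w] by (simp add: closeness_def)
    next
      case (Suc k')
      have "slice_log k' \<le> slice_log k" using Suc by (intro slice_log_mono) simp
      then have "twins (Pre k' (odo w)) (Pre k' (odo w'))"
        using prefix odo_prefix_eq[of "slice_log k'" w w'] by simp
      then have "closeness (step (Pre k w)) (step y) = level a (odo w) + 1 / real (Suc k')"
        using Suc y first_diff_step by (simp add: closeness_def odo_closeness_def)
      moreover have "level a w < level a (odo w)" by (rule level_odo_less) fact
      moreover have "1 / real (Suc k) < 1 / real (Suc k')" using Suc by (simp add: frac_less2)
      ultimately show ?thesis using closeness_y by linarith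
    qed
  qed
qed

lemma split_level_step_Odo_Odo:
  assumes "z \<noteq> z'"
  shows "split_level (Odo (odo z)) (Odo (odo z')) = split_level (Odo z) (Odo z')"
proof -
  have ex: "\<exists>i. splits (Odo z) (Odo z') i" using assms by (intro ex_splits) auto
  show ?thesis
    using split_level_splits[of "Odo z" "Odo z'"] ex
    by (intro split_level_shift[OF ex]) (auto simp: splits_def)
qed

lemma split_level_step_Odo_Pre:
  assumes "offset (split_level (Odo z) (Pre (Suc k) w)) z \<noteq> 0"
  shows "split_level (Odo (odo z)) (Pre k (odo w)) = split_level (Odo z) (Pre (Suc k) w)"
proof -
  define m where "m = split_level (Odo z) (Pre (Suc k) w)"
  have ex: "\<exists>i. splits (Odo z) (Pre (Suc k) w) i" by (auto simp: splits_def)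
  then have splits_m: "splits (Odo z) (Pre (Suc k) w) m" unfolding m_def
    using split_level_splits by blast
  have m_le: "m \<le> cap_level (Suc k) w"
    using split_level_le_cap[of "Pre (Suc k) w" _ "Odo z"] by (simp add: m_def split_level_sym)
  have "offset m w = offset m z"
    using split_level_prefix_eq[of "Odo z" "Pre (Suc k) w"] by (intro offset_cong) (simp add: m_def)
  have "m \<le> cap_level k (odo w)"
  proof (rule ccontr)
    assume "\<not> m \<le> cap_level k (odo w)"
    then have "m = cap_level (Suc k) w"
      using cap_level_step[of k w] m_le by auto
    then have "offset m w = 0"
      using cap_level_step[of k w] \<open>\<not> m \<le> cap_level k (odo w)\<close> by auto
    then show False using \<open>offset m w = offset m z\<close> assms by (simp add: m_def)
  qed
  moreover have "m = cap_level (Suc k) w \<Longrightarrow> m = cap_level k (odo w)"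
    using cap_level_step[of k w] \<open>m \<le> cap_level k (odo w)\<close> by auto
  ultimately show ?thesis
    using splits_m unfolding m_def by (intro split_level_shift[OF ex]) (auto simp: splits_def)
qed

lemma step_expands_at_Odo: "step_expands_at (Odo z)"
  unfolding step_expands_at_def
proof -
  obtain K where K: "\<forall>a\<ge>K. offset a z \<noteq> 0" using eventually_offset_nonzero by blast
  show "\<exists>T. \<forall>y. y \<noteq> Odo z \<longrightarrow> T < closeness (Odo z) y \<longrightarrow>
          closeness (Odo z) y < closeness (step (Odo z)) (step y)"
  proof (intro exI[of _ "real K + 1"] allI impI)
    fix y assume ne: "y \<noteq> Odo z" and gt: "real K + 1 < closeness (Odo z) y"
    define m where "m = split_level (Odo z) y"
    have "odo_side y" using closeness_odo_side[of "Odo z" y] gt by simp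
    then have closeness_y: "closeness (Odo z) y = level m z"
      by (simp add: closeness_def odo_closeness_def m_def)
    then have "real K < real m" using gt level_bounds(2)[of m z] by simp
    then have offset_m: "offset m z \<noteq> 0" using K by simp
    have "split_level (step (Odo z)) (step y) = m \<and> odo_side (step y)"
    proof (cases y)
      case (Odo z')
      then show ?thesis using ne split_level_step_Odo_Odo[of z z'] by (simp add: m_def)
    next
      case (Pre k w)
      then have "m \<le> cap_level k w"
        using split_level_le_cap[of y _ "Odo z"] by (simp add: m_def split_level_sym)
      then obtain k' where "k = Suc k'" using offset_m by (cases k) auto
      then show ?thesis using Pre offset_m split_level_step_Odo_Pre[of z k' w] by (simp add: m_def)
    qed (use \<open>odo_side y\<close> in auto)
    then have "closeness (step (Odo z)) (step y) = level m (odo z)"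
      by (simp add: closeness_def odo_closeness_def)
    then show "closeness (Odo z) y < closeness (step (Odo z)) (step y)"
      using closeness_y level_odo_less[OF offset_m] by simp
  qed
qed

lemma step_expands_at: "step_expands_at x"
  using step_expands_at_Fix step_expands_at_Odo step_expands_at_Pre step_expands_at_Post
  by (cases x) auto

lemma pdist_step_less:
  "\<exists>\<delta>>0. \<forall>y. 0 < pdist x y \<and> pdist x y < \<delta> \<longrightarrow> pdist (step x) (step y) < pdist x y"
proof -
  obtain T where
    T: "\<forall>y. y \<noteq> x \<longrightarrow> T < closeness x y \<longrightarrow> closeness x y < closeness (step x) (step y)"
    using step_expands_at[of x] unfolding step_expands_at_def by blast
  define T' where "T' = max T 0"
  show ?thesis
  proof (intro exI[of _ "1 / (1 + T')"] conjI allI impI)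
    show "0 < 1 / (1 + T')" by (simp add: T'_def add_pos_nonneg)
    fix y assume y: "0 < pdist x y \<and> pdist x y < 1 / (1 + T')"
    then have "y \<noteq> x" by (auto simp: pdist_def)
    then have "1 / (1 + closeness x y) < 1 / (1 + T')" using y by (simp add: pdist_def)
    moreover have "0 < 1 + closeness x y" "0 < 1 + T'"
      using closeness_nonneg[of x y] by (simp_all add: T'_def add_pos_nonneg)
    ultimately have "T' < closeness x y"
      using inverse_less_iff_less[of "1 + closeness x y" "1 + T'"] by (simp add: inverse_eq_divide)
    then have "closeness x y < closeness (step x) (step y)" using T \<open>y \<noteq> x\<close> by (simp add: T'_def)
    moreover have "step x \<noteq> step y" using \<open>y \<noteq> x\<close> step_inj by blast
    ultimately show "pdist (step x) (step y) < pdist x y"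
      using \<open>y \<noteq> x\<close> closeness_nonneg[of x y] by (simp add: pdist_def divide_strict_left_mono)
  qed
qed

lemma closeness_unbounded: "\<exists>y. y \<noteq> x \<and> real n \<le> closeness x y"
proof (cases x)
  case Fix
  then show ?thesis by (intro exI[of _ "Post n w"]) (auto simp: closeness_def)
next
  case (Post j w)
  let ?y = "Post j (w(n := \<not> w n))"
  have "?y \<noteq> x" using Post by (auto simp: fun_eq_iff)
  moreover have "real n \<le> closeness x ?y" using Post by (simp add: closeness_def first_diff_flip)
  ultimately show ?thesis by blast
next
  case (Pre k w)
  define a where "a = n + slice_log k"
  let ?y = "Pre k (w(a := \<not> w a))"
  have "twins x ?y" using Pre by (simp add: a_def)
  then have "closeness x ?y = level a w + 1 / real (Suc k)"
    using Pre by (simp add: closeness_def odo_closeness_def first_diff_flip)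
  moreover have "real n \<le> level a w" using level_bounds(1)[of a w] by (simp add: a_def)
  ultimately have "real n \<le> closeness x ?y" by (simp add: add_increasing2)
  moreover have "?y \<noteq> x" using Pre by (auto simp: fun_eq_iff)
  ultimately show ?thesis by blast
next
  case (Odo z)
  let ?y = "Odo (z(n := \<not> z n))"
  have "n \<le> split_level x ?y"
    using Odo by (intro split_level_ge) (auto simp: splits_def)
  then have "real n \<le> closeness x ?y"
    using Odo level_bounds(1)[of "split_level x ?y" z]
      by (simp add: closeness_def odo_closeness_def)
  moreover have "?y \<noteq> x" using Odo by (auto simp: fun_eq_iff)
  ultimately show ?thesis by blast
qed

section \<open>Embedding in the plane\<close>

definition vec2 :: "real \<Rightarrow> real \<Rightarrow> real^2" where
  "vec2 a b = (\<chi> i. if i = 1 then a else b)"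

lemma vec2_nth [simp]: "vec2 a b $ 1 = a" "vec2 a b $ 2 = b"
  by (simp_all add: vec2_def)

lemma vec2_eq_iff: "vec2 a b = vec2 c d \<longleftrightarrow> a = c \<and> b = d"
  by (metis vec2_nth)

lemma dist_vec2_ge:
  "\<bar>a - c\<bar> \<le> dist (vec2 a b) (vec2 c d)" "\<bar>b - d\<bar> \<le> dist (vec2 a b) (vec2 c d)"
  using component_le_norm_cart[of "vec2 a b - vec2 c d" 1]
    component_le_norm_cart[of "vec2 a b - vec2 c d" 2]
  by (simp_all add: dist_norm)

lemma continuous_on_vec2 [continuous_intros]:
  assumes "continuous_on S f" "continuous_on S g"
  shows "continuous_on S (\<lambda>x. vec2 (f x) (g x))"
  unfolding vec2_def
proof (intro continuous_on_vec_lambda)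
  fix i :: 2
  show "continuous_on S (\<lambda>x. if i = 1 then f x else g x)"
    using assms by (cases "i = 1") simp_all
qed

fun xcoord :: "point \<Rightarrow> real" where
  "xcoord Fix = 3"
| "xcoord (Odo z) = 0"
| "xcoord (Pre k w) = 1 / real (Suc k)"
| "xcoord (Post j w) = 3 - 1 / real (Suc j)"

fun ycoord :: "point \<Rightarrow> real" where
  "ycoord Fix = 0"
| "ycoord (Odo z) = cantor_map z"
| "ycoord (Pre k w) = cantor_map w"
| "ycoord (Post j w) = cantor_map w / real (Suc j)"

definition to_plane :: "point \<Rightarrow> real^2" where
  "to_plane x = vec2 (xcoord x) (ycoord x)"

lemma dist_to_plane_ge:
  "\<bar>xcoord x - xcoord y\<bar> \<le> dist (to_plane x) (to_plane y)"
  "\<bar>ycoord x - ycoord y\<bar> \<le> dist (to_plane x) (to_plane y)"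
  unfolding to_plane_def by (rule dist_vec2_ge)+

lemma xcoord_bounds:
  "odo_side x \<Longrightarrow> 0 \<le> xcoord x \<and> xcoord x \<le> 1"
  "fix_side x \<Longrightarrow> 2 \<le> xcoord x \<and> xcoord x \<le> 3"
  by (cases x; simp add: field_simps)+

lemma odo_side_iff_xcoord: "odo_side x \<longleftrightarrow> xcoord x \<le> 1"
proof (cases x)
  case (Post j w)
  then show ?thesis by (simp add: field_simps)
qed simp_all

lemma to_plane_inj: "inj to_plane"
proof (rule injI)
  fix x y assume "to_plane x = to_plane y"
  then have xy: "xcoord x = xcoord y" "ycoord x = ycoord y"
    by (simp_all add: to_plane_def vec2_eq_iff)
  have "odo_side x \<longleftrightarrow> odo_side y"
    using xy(1) by (simp add: odo_side_iff_xcoord)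
  then show "x = y"
    using xy cantor_map_bounds by (cases x; cases y) (auto dest: cantor_map_inj)
qed

lemma dist_to_plane_other_side:
  assumes "odo_side x \<noteq> odo_side y"
  shows "1 \<le> dist (to_plane x) (to_plane y)"
proof -
  have "fix_side u \<longleftrightarrow> \<not> odo_side u" for u by (cases u) auto
  then have "1 \<le> \<bar>xcoord x - xcoord y\<bar>"
    using assms xcoord_bounds[of x] xcoord_bounds[of y] by (cases "odo_side x") auto
  then show ?thesis using dist_to_plane_ge(1)[of x y] by linarith
qed

lemma to_plane_close_Fix:
  "\<exists>\<eta>>0. \<forall>y. dist (to_plane Fix) (to_plane y) < \<eta> \<longrightarrow> y = Fix \<or> real n \<le> closeness Fix y"
proof (intro exI[of _ "1 / real (Suc n)"] conjI allI impI)
  fix y assume near: "dist (to_plane Fix) (to_plane y) < 1 / real (Suc n)"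
  have "\<not> odo_side y"
  proof
    assume "odo_side y"
    then have "1 \<le> dist (to_plane Fix) (to_plane y)" by (intro dist_to_plane_other_side) simp
    moreover have "1 / real (Suc n) \<le> 1" by simp
    ultimately show False using near by linarith
  qed
  then consider "y = Fix" | j w where "y = Post j w" by (cases y) auto
  then show "y = Fix \<or> real n \<le> closeness Fix y"
  proof cases
    case 2
    then have "1 / real (Suc j) < 1 / real (Suc n)"
      using near dist_to_plane_ge(1)[of Fix y] by simp
    moreover have "j \<le> n \<Longrightarrow> 1 / real (Suc n) \<le> 1 / real (Suc j)"
      by (intro divide_left_mono) auto
    ultimately have "n < j" by linarith
    then show ?thesis using 2 by (simp add: closeness_def)
  qed simp
qed simp

lemma to_plane_close_Post:
  "\<exists>\<eta>>0. \<forall>y. dist (to_plane (Post j w)) (to_plane y) < \<eta> \<longrightarrow>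
     y = Post j w \<or> real n \<le> closeness (Post j w) y"
proof -
  define \<eta> where "\<eta> = min (1 / (real (Suc j) * real (Suc (Suc j)))) ((1/3)^n / real (Suc j))"
  have \<eta>_le: "\<eta> \<le> (1/3)^n / real (Suc j)" unfolding \<eta>_def by (rule min.cobounded2)
  have "0 < \<eta>" by (simp add: \<eta>_def)
  moreover have "y = Post j w \<or> real n \<le> closeness (Post j w) y"
    if near: "dist (to_plane (Post j w)) (to_plane y) < \<eta>" for y
  proof -
    have "\<eta> \<le> 1 / (real (Suc j) * real (Suc (Suc j)))" unfolding \<eta>_def by (rule min.cobounded1)
    moreover have "1 / real (Suc j) \<le> 1" by simp
    ultimately have "\<eta> \<le> 1" using inverse_Suc_gap_le[of j] by linarith
    then have "\<not> odo_side y" using near dist_to_plane_other_side[of "Post j w" y] by auto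
    moreover have "y \<noteq> Fix"
      using near dist_to_plane_ge(1)[of "Post j w" Fix] inverse_Suc_gap_le[of j]
        by (auto simp: \<eta>_def)
    ultimately obtain j' w' where y: "y = Post j' w'" by (cases y) auto
    have "j' = j"
      using near dist_to_plane_ge(1)[of "Post j w" y] inverse_Suc_gap[of j j'] y
      by (auto simp: \<eta>_def abs_minus_commute)
    have "\<bar>cantor_map w - cantor_map w'\<bar> / real (Suc j) \<le> dist (to_plane (Post j w)) (to_plane y)"
      using dist_to_plane_ge(2)[of "Post j w" y] y \<open>j' = j\<close>
        by (simp add: diff_divide_distrib[symmetric])
    then have "\<bar>cantor_map w - cantor_map w'\<bar> / real (Suc j) < (1/3)^n / real (Suc j)"
      using near \<eta>_le by linarith
    then have "\<forall>i<n. w i = w' i"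
      by (intro cantor_map_close_prefix_eq) (simp add: divide_less_cancel)
    then show ?thesis
      using first_diff_ge[of n w w'] y \<open>j' = j\<close> by (cases "w = w'") (auto simp: closeness_def)
  qed
  ultimately show ?thesis by blast
qed

lemma to_plane_close_Pre:
  "\<exists>\<eta>>0. \<forall>y. dist (to_plane (Pre k w)) (to_plane y) < \<eta> \<longrightarrow>
     y = Pre k w \<or> real n \<le> closeness (Pre k w) y"
proof -
  define a where "a = n + slice_log k"
  define \<eta> where "\<eta> = min (1 / (real (Suc k) * real (Suc (Suc k)))) ((1/3)^a)"
  have "0 < \<eta>" by (simp add: \<eta>_def)
  moreover have "y = Pre k w \<or> real n \<le> closeness (Pre k w) y"
    if near: "dist (to_plane (Pre k w)) (to_plane y) < \<eta>" for y
  proof -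
    have "\<eta> \<le> 1 / (real (Suc k) * real (Suc (Suc k)))" unfolding \<eta>_def by (rule min.cobounded1)
    moreover have "1 / real (Suc k) \<le> 1" by simp
    ultimately have "\<eta> \<le> 1" using inverse_Suc_gap_le[of k] by linarith
    then have "odo_side y" using near dist_to_plane_other_side[of "Pre k w" y] by auto
    moreover have "\<not> (\<exists>z. y = Odo z)"
      using near dist_to_plane_ge(1)[of "Pre k w" y] inverse_Suc_gap_le[of k] by (auto simp: \<eta>_def)
    ultimately obtain k' w' where y: "y = Pre k' w'" by (cases y) auto
    have "k' = k"
      using near dist_to_plane_ge(1)[of "Pre k w" y] inverse_Suc_gap[of k k'] y
      by (auto simp: \<eta>_def abs_minus_commute)
    have "\<bar>cantor_map w - cantor_map w'\<bar> < (1/3)^a"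
      using near dist_to_plane_ge(2)[of "Pre k w" y] y by (simp add: \<eta>_def)
    then have prefix: "\<forall>i<a. w i = w' i" by (rule cantor_map_close_prefix_eq)
    show ?thesis
    proof (cases "w = w'")
      case False
      then have "a \<le> first_diff w w'" using prefix by (rule first_diff_ge[rotated])
      then have "real n \<le> level (first_diff w w') w"
        using level_bounds(1)[of "first_diff w w'" w] by (simp add: a_def)
      moreover have "twins (Pre k w) y" using prefix y \<open>k' = k\<close> by (simp add: a_def)
      ultimately show ?thesis
        using y \<open>k' = k\<close> by (simp add: closeness_def odo_closeness_def add_increasing2)
    qed (simp add: y \<open>k' = k\<close>)
  qed
  ultimately show ?thesis by blast
qed

lemma to_plane_close_Odo:
  "\<exists>\<eta>>0. \<forall>y. dist (to_plane (Odo z)) (to_plane y) < \<eta> \<longrightarrow>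
     y = Odo z \<or> real n \<le> closeness (Odo z) y"
proof -
  define \<eta> :: real where "\<eta> = min ((1/2)^Suc n) ((1/3)^n)"
  have \<eta>_le: "\<eta> \<le> (1/2)^Suc n" "\<eta> \<le> (1/3)^n" by (simp_all add: \<eta>_def)
  have "0 < \<eta>" by (simp add: \<eta>_def)
  moreover have "y = Odo z \<or> real n \<le> closeness (Odo z) y"
    if near: "dist (to_plane (Odo z)) (to_plane y) < \<eta>" and "y \<noteq> Odo z" for y
  proof -
    have "(1/2::real)^Suc n \<le> 1" by (rule power_le_one) simp_all
    then have "odo_side y"
      using near \<eta>_le dist_to_plane_other_side[of "Odo z" y] by fastforce
    then have "ycoord y = cantor_map (code y)" by (cases y) auto
    then have "\<bar>cantor_map z - cantor_map (code y)\<bar> < (1/3)^n"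
      using near \<eta>_le dist_to_plane_ge(2)[of "Odo z" y] by simp
    then have prefix: "\<forall>i<n. z i = code y i" by (rule cantor_map_close_prefix_eq)
    have no_cap: "\<forall>i<n. cap y \<noteq> Some i"
    proof (cases y)
      case (Pre k w)
      have "1 / real (Suc k) < (1/2)^Suc n"
        using near \<eta>_le dist_to_plane_ge(1)[of "Odo z" y] Pre by simp
      then have "(2::real)^Suc n < real (Suc k)"
        by (simp add: power_one_over field_simps)
      also have "\<dots> < 2 * 2^slice_log k"
        using slice_log_bounds(2)[of k]
          by (metis of_nat_less_iff of_nat_mult of_nat_numeral of_nat_power)
      finally have "n < slice_log k" by (simp flip: power_Suc)
      then show ?thesis using Pre cap_level_bounds(2)[of k w] by auto
    qed auto
    have "n \<le> split_level (Odo z) y"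
      using \<open>odo_side y\<close> \<open>y \<noteq> Odo z\<close> prefix no_cap
      by (intro split_level_ge ex_splits) (auto simp: splits_def)
    then show ?thesis
      using \<open>odo_side y\<close> level_bounds(1)[of "split_level (Odo z) y" z]
      by (simp add: closeness_def odo_closeness_def)
  qed
  ultimately show ?thesis by blast
qed

lemma to_plane_close:
  "\<exists>\<eta>>0. \<forall>y. dist (to_plane x) (to_plane y) < \<eta> \<longrightarrow> y = x \<or> real n \<le> closeness x y"
  using to_plane_close_Fix to_plane_close_Odo to_plane_close_Pre to_plane_close_Post
    by (cases x) auto

section \<open>The planar system\<close>

definition plane_space :: "(real^2) set" where
  "plane_space = range to_plane"

definition plane_dist :: "real^2 \<Rightarrow> real^2 \<Rightarrow> real" where
  "plane_dist u v = pdist (inv to_plane u) (inv to_plane v)"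

definition plane_map :: "real^2 \<Rightarrow> real^2" where
  "plane_map u = to_plane (step (inv to_plane u))"

lemma inv_to_plane [simp]: "inv to_plane (to_plane x) = x"
  using to_plane_inj by (rule inv_f_f)

lemma plane_dist_to_plane [simp]: "plane_dist (to_plane x) (to_plane y) = pdist x y"
  by (simp add: plane_dist_def)

lemma plane_map_to_plane [simp]: "plane_map (to_plane x) = to_plane (step x)"
  by (simp add: plane_map_def)

lemma plane_map_pow_to_plane: "(plane_map ^^ n) (to_plane x) = to_plane ((step ^^ n) x)"
  by (induction n) auto

lemma to_plane_in_plane_space [simp]: "to_plane x \<in> plane_space"
  by (simp add: plane_space_def)

lemma plane_spaceE:
  assumes "u \<in> plane_space"
  obtains x where "u = to_plane x"
  using assms by (auto simp: plane_space_def)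

lemma Metric_space_plane_dist: "Metric_space plane_space plane_dist"
proof
  fix u v w
  show "0 \<le> plane_dist u v" by (simp add: plane_dist_def pdist_nonneg)
  show "plane_dist u v = plane_dist v u" by (simp add: plane_dist_def pdist_sym)
  show "u \<in> plane_space \<Longrightarrow> v \<in> plane_space \<Longrightarrow> plane_dist u v = 0 \<longleftrightarrow> u = v"
    by (auto simp: plane_space_def pdist_eq_0_iff)
  show "plane_dist u w \<le> plane_dist u v + plane_dist v w"
    by (simp add: plane_dist_def pdist_triangle)
qed

interpretation plane: Metric_space plane_space plane_dist
  by (rule Metric_space_plane_dist)

lemma compact_plane_space: "compact plane_space"
proof -
  define T :: "real set" where "T = insert 0 (range (\<lambda>k. 1 / real (Suc k)))"
  define f1 :: "real \<times> real \<Rightarrow> real^2" where "f1 = (\<lambda>(t, c). vec2 t c)"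
  define f2 :: "real \<times> real \<Rightarrow> real^2" where "f2 = (\<lambda>(t, c). vec2 (3 - t) (t * c))"
  have "compact T"
    unfolding T_def using compact_sequence_with_limit[OF LIMSEQ_inverse_real_of_nat]
    by (simp add: inverse_eq_divide)
  then have K: "compact (T \<times> range cantor_map)" by (intro compact_Times compact_range_cantor_map)
  have "plane_space = f1 ` (T \<times> range cantor_map) \<union> f2 ` (T \<times> range cantor_map)"
  proof (intro equalityI subsetI)
    fix u assume "u \<in> plane_space"
    then obtain x where "u = to_plane x" by (rule plane_spaceE)
    then show "u \<in> f1 ` (T \<times> range cantor_map) \<union> f2 ` (T \<times> range cantor_map)"
    proof (cases x)
      case Fix
      then have "u = f2 (0, cantor_map z)" for z
        using \<open>u = to_plane x\<close> by (simp add: f2_def to_plane_def)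
      then show ?thesis by (force simp: T_def)
    next
      case (Post j w)
      then have "u = f2 (1 / real (Suc j), cantor_map w)"
        using \<open>u = to_plane x\<close> by (simp add: f2_def to_plane_def)
      then show ?thesis by (force simp: T_def)
    qed (use \<open>u = to_plane x\<close> in \<open>force simp: f1_def T_def to_plane_def\<close>)+
  next
    fix u assume "u \<in> f1 ` (T \<times> range cantor_map) \<union> f2 ` (T \<times> range cantor_map)"
    then obtain t w where "t \<in> T" "u = f1 (t, cantor_map w) \<or> u = f2 (t, cantor_map w)" by blast
    then have "u \<in> to_plane ` {Odo w, Fix} \<or> (\<exists>k. u \<in> to_plane ` {Pre k w, Post k w})"
      by (auto simp: T_def f1_def f2_def to_plane_def)
    then show "u \<in> plane_space" by (auto simp: plane_space_def)
  qed
  moreover have "continuous_on UNIV f1" "continuous_on UNIV f2"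
    unfolding f1_def f2_def by (simp_all add: case_prod_unfold continuous_intros)
  ultimately show ?thesis
    using K by (metis compact_Un compact_continuous_image continuous_on_subset subset_UNIV)
qed

lemma continuous_map_id_plane: "continuous_map (top_of_set plane_space) plane.mtopology id"
proof -
  have "\<exists>U. openin (top_of_set plane_space) U \<and> u \<in> U \<and> (\<forall>v\<in>U. v \<in> plane.mball u \<epsilon>)"
    if "u \<in> plane_space" "0 < \<epsilon>" for u \<epsilon>
  proof -
    obtain x where x: "u = to_plane x" using \<open>u \<in> plane_space\<close> by (rule plane_spaceE)
    obtain n :: nat where n: "1 / \<epsilon> < real n" using reals_Archimedean2 by blast
    obtain \<eta> where "\<eta> > 0"
      and \<eta>: "\<forall>y. dist (to_plane x) (to_plane y) < \<eta> \<longrightarrow> y = x \<or> real n \<le> closeness x y"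
      using to_plane_close by blast
    have "v \<in> plane.mball u \<epsilon>" if v: "v \<in> plane_space \<inter> ball u \<eta>" for v
    proof -
      obtain y where y: "v = to_plane y" using v by (auto elim: plane_spaceE)
      have "pdist x y < \<epsilon>"
      proof (cases "y = x")
        case False
        then have "real n \<le> closeness x y" using \<eta> v x y by (auto simp: dist_commute)
        then have "1 / \<epsilon> < 1 + closeness x y" using n by linarith
        then show ?thesis
          using False \<open>0 < \<epsilon>\<close> closeness_nonneg[of x y] by (simp add: pdist_def field_simps)
      qed (simp add: pdist_def \<open>0 < \<epsilon>\<close>)
      then show ?thesis using x y by simp
    qed
    moreover have "openin (top_of_set plane_space) (plane_space \<inter> ball u \<eta>)"
      by (simp add: openin_open_Int)
    ultimately show ?thesis
      using \<open>\<eta> > 0\<close> x by (intro exI[of _ "plane_space \<inter> ball u \<eta>"]) auto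
  qed
  then show ?thesis unfolding plane.continuous_map_to_metric by simp
qed

lemma mtopology_plane: "plane.mtopology = top_of_set plane_space"
  using compact_plane_space continuous_map_id_plane
  by (intro plane.mtopology_eq_of_compact) (auto simp: compact_space_def compactin_subtopology)

lemma cantor_set_plane_space: "cantor_set plane_space"
  unfolding cantor_set_def
proof (intro conjI ballI)
  show "compact plane_space" by (rule compact_plane_space)
  show "totally_disconnected_set plane_space"
    unfolding totally_disconnected_set_def
  proof (intro allI impI)
    fix S assume "S \<subseteq> plane_space \<and> connected S"
    then have "connectedin plane.mtopology S"
      by (simp add: mtopology_plane connectedin_subtopology)
    moreover have "plane_dist u w \<le> max (plane_dist u v) (plane_dist v w)" for u v w
      by (simp add: plane_dist_def pdist_ultra)
    ultimately show "\<exists>a. S \<subseteq> {a}" by (intro plane.ultrametric_connectedin_subsingleton)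
  qed
  fix u assume "u \<in> plane_space"
  then obtain x where x: "u = to_plane x" by (rule plane_spaceE)
  show "u islimpt plane_space"
  proof (rule islimpt_of_mtopology_eq[OF Metric_space_plane_dist mtopology_plane \<open>u \<in> plane_space\<close>])
    fix r :: real assume "0 < r"
    obtain n :: nat where n: "1 / r < real n" using reals_Archimedean2 by blast
    obtain y where "y \<noteq> x" "real n \<le> closeness x y" using closeness_unbounded by blast
    then have "1 / r < 1 + closeness x y" using n by linarith
    then have "pdist x y < r"
      using \<open>0 < r\<close> \<open>y \<noteq> x\<close> closeness_nonneg[of x y] by (simp add: pdist_def field_simps)
    moreover have "to_plane y \<noteq> u" using \<open>y \<noteq> x\<close> x to_plane_inj by (auto dest: injD)
    ultimately show "\<exists>v\<in>plane_space. v \<noteq> u \<and> plane_dist u v < r" using x by force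
  qed
qed

lemma LRS_plane_map: "LRS plane_space plane_dist plane_map"
  unfolding LRS_def
proof
  fix u assume "u \<in> plane_space"
  then obtain x where x: "u = to_plane x" by (rule plane_spaceE)
  obtain \<delta> where "\<delta> > 0"
    and \<delta>: "\<forall>y. 0 < pdist x y \<and> pdist x y < \<delta> \<longrightarrow> pdist (step x) (step y) < pdist x y"
    using pdist_step_less by blast
  show "\<exists>\<epsilon>>0. \<forall>v\<in>plane_space. 0 < plane_dist u v \<and> plane_dist u v < \<epsilon> \<longrightarrow>
          plane_dist (plane_map u) (plane_map v) < plane_dist u v"
  proof (intro exI[of _ \<delta>] conjI ballI impI)
    fix v assume v: "v \<in> plane_space" and close: "0 < plane_dist u v \<and> plane_dist u v < \<delta>"
    obtain y where y: "v = to_plane y" using v by (rule plane_spaceE)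
    have "0 < pdist x y \<and> pdist x y < \<delta>" using close x y by (simp only: plane_dist_to_plane)
    then show "plane_dist (plane_map u) (plane_map v) < plane_dist u v"
      using \<delta> x y by simp
  qed fact
qed

lemma plane_map_image: "plane_map ` plane_space = plane_space"
proof (intro equalityI subsetI)
  fix u assume "u \<in> plane_space"
  then obtain x where "u = to_plane x" by (rule plane_spaceE)
  then have "u = plane_map (to_plane (step_inv x))" by simp
  then show "u \<in> plane_map ` plane_space" using to_plane_in_plane_space by blast
qed (auto elim!: plane_spaceE)

lemma homeomorphism_plane_map: "\<exists>G'. homeomorphism plane_space plane_space plane_map G'"
proof (rule homeomorphism_compact[OF compact_plane_space _ plane_map_image])
  have "continuous_map plane.mtopology plane.mtopology plane_map"
    using LRS_plane_map plane_map_image by (intro plane.LRS_imp_continuous_map) auto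
  then show "continuous_on plane_space plane_map"
    by (simp add: mtopology_plane)
  show "inj_on plane_map plane_space"
    by (auto intro!: inj_onI elim!: plane_spaceE simp: inj_eq[OF to_plane_inj] dest: step_inj)
qed

fun transient :: "point \<Rightarrow> bool" where
  "transient (Pre _ _) = True" | "transient (Post _ _) = True" | "transient _ = False"

fun clock :: "point \<Rightarrow> int" where
  "clock (Pre k w) = - int k - 1" | "clock (Post j w) = int j" | "clock _ = 0"

lemma clock_step_pow:
  "transient x \<Longrightarrow> transient ((step ^^ n) x) \<and> clock ((step ^^ n) x) = clock x + int n"
proof (induction n)
  case (Suc n)
  then show ?case by (cases "(step ^^ n) x" rule: step.cases) auto
qed simp

lemma step_pow_Odo: "(step ^^ n) (Odo z) = Odo ((odo ^^ n) z)"
  by (induction n) auto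

lemma step_pow_Post: "(step ^^ n) (Post j w) = Post (j + n) ((odo ^^ n) w)"
  by (induction n) auto

lemma step_periodic_point: "n \<ge> 1 \<Longrightarrow> (step ^^ n) x = x \<Longrightarrow> x = Fix"
  using odo_pow_no_fixpoint clock_step_pow[of x n]
  by (cases x) (auto simp: step_pow_Odo)

lemma periodic_points_plane_map: "periodic_points plane_space plane_map = {to_plane Fix}"
proof -
  have "(plane_map ^^ n) (to_plane x) = to_plane x \<longleftrightarrow> (step ^^ n) x = x" for n x
    by (simp add: plane_map_pow_to_plane inj_eq[OF to_plane_inj])
  moreover have "(step ^^ n) x = x \<longleftrightarrow> x = Fix" if "1 \<le> n" for n x
  proof
    show "x = Fix \<Longrightarrow> (step ^^ n) x = x" by (induction n) auto
  qed (rule step_periodic_point[OF that])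
  ultimately show ?thesis
    by (auto simp: periodic_points_def plane_space_def intro: exI[of _ 1])
qed

lemma not_transitive_plane_map: "\<not> transitive_on plane_space plane_map"
proof
  define U where "U = plane_space \<inter> ({v. v $ 1 > 3/2} \<inter> {v. v $ 1 < 9/4})"
  have "open ({v :: real^2. v $ 1 > 3/2} \<inter> {v. v $ 1 < 9/4})"
    by (intro open_Int open_halfspace_component_gt_cart open_halfspace_component_lt_cart)
  then have "openin (top_of_set plane_space) U" by (auto simp: U_def openin_open_Int)
  moreover have "to_plane (Post 0 w) \<in> U" for w by (simp add: U_def) (simp add: to_plane_def)
  moreover assume "transitive_on plane_space plane_map"
  ultimately obtain n u where "n \<ge> 1" "u \<in> U" "(plane_map ^^ n) u \<in> U"
    unfolding transitive_on_def by blast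
  then obtain x where x: "u = to_plane x" "3/2 < xcoord x" "xcoord x < 9/4"
    by (auto simp: U_def to_plane_def elim!: plane_spaceE)
  then have "x = Post 0 (code x)"
    by (cases x) (auto simp: field_simps)
  then have "(plane_map ^^ n) u = to_plane (Post n ((odo ^^ n) (code x)))"
    using x by (metis plane_map_pow_to_plane step_pow_Post add_0)
  then have "3 - 1 / real (Suc n) < 9/4"
    using \<open>(plane_map ^^ n) u \<in> U\<close> by (simp add: U_def to_plane_def)
  moreover have "1 / real (Suc n) \<le> 1/2" using \<open>n \<ge> 1\<close> by (simp add: field_simps)
  ultimately show False by linarith
qed

theorem theoremE:
  shows "\<exists>(W :: (real^2) set) (d :: real^2 \<Rightarrow> real^2 \<Rightarrow> real) (G :: real^2 \<Rightarrow> real^2).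
     cantor_set W \<and>
     Metric_space W d \<and> Metric_space.mtopology W d = top_of_set W \<and>
     (\<exists>G'. homeomorphism W W G G') \<and>
     \<not> transitive_on W G \<and>
     LRS W d G \<and>
     (\<exists>p. periodic_points W G = {p} \<and> G p = p)"
  using cantor_set_plane_space Metric_space_plane_dist mtopology_plane homeomorphism_plane_map
    not_transitive_plane_map LRS_plane_map periodic_points_plane_map
  by (intro exI[of _ plane_space] exI[of _ plane_dist] exI[of _ plane_map]) simp

end
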